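(* Let $\langle H,M,T\rangle$ be an abduction instance, let $X$ be the set of variables of $T$, let $\Pi(H\cup X)=\{\gamma_1,\ldots,\gamma_k\}$, and let $C=\{c_1,\ldots,c_k\}$, $D=\{d_1,\ldots,d_k\}$ be sets of fresh variables. Define $f(\langle H,M,T\rangle)=\langle H',M',T'\rangle$ where $H'=H\cup C\cup D$, $M'=M\cup\{c_i\mid \gamma_i\in T\}\cup\{d_i\mid\gamma_i\notin T\}$, and $T'=\{\neg c_i\vee\neg d_i\mid \gamma_i\in\Pi(H\cup X)\}\cup\{c_i\rightarrow\gamma_i\mid\gamma_i\in\Pi(H\cup X)\}$. Then \[SOL(f(\langle H,M,T\rangle))=\{S\cup\{c_i\mid\gamma_i\in T\}\cup\{d_i\mid\gamma_i\notin T\}\mid S\in SOL(\langle H,M,T\rangle)\}.\]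
   Context: An abduction instance is a triple $\langle H,M,T\rangle$ where $T$ is a propositional theory in 3CNF (so $T\subseteq\Pi(V)$ for $V$ the variables of $T$), $H$ is a set of propositional variables and $M$ a set of propositional variables. $SOL(\langle H,M,T\rangle)=\{H'\subseteq H\mid H'\cup T\text{ consistent and } H'\cup T\models M\}$. For a set of variables $Y$, $\Pi(Y)$ denotes the set of all distinct clauses of three literals over $Y$. *)

theory Defs
  imports Main
begin

datatype 'v lit = Pos 'v | Neg 'v

type_synonym 'v clause = "'v lit set"

fun lvar :: "'v lit \<Rightarrow> 'v" where
  "lvar (Pos v) = v" | "lvar (Neg v) = v"

fun lit_sat :: "('v \<Rightarrow> bool) \<Rightarrow> 'v lit \<Rightarrow> bool" where
  "lit_sat \<sigma> (Pos v) = \<sigma> v" | "lit_sat \<sigma> (Neg v) = (\<not> \<sigma> v)"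

definition clause_sat :: "('v \<Rightarrow> bool) \<Rightarrow> 'v clause \<Rightarrow> bool" where
  "clause_sat \<sigma> C \<longleftrightarrow> (\<exists>l\<in>C. lit_sat \<sigma> l)"

definition models :: "('v \<Rightarrow> bool) \<Rightarrow> 'v clause set \<Rightarrow> bool" where
  "models \<sigma> F \<longleftrightarrow> (\<forall>C\<in>F. clause_sat \<sigma> C)"

definition consistent :: "'v clause set \<Rightarrow> bool" where
  "consistent F \<longleftrightarrow> (\<exists>\<sigma>. models \<sigma> F)"

definition entails_vars :: "'v clause set \<Rightarrow> 'v set \<Rightarrow> bool" where
  "entails_vars F M \<longleftrightarrow> (\<forall>\<sigma>. models \<sigma> F \<longrightarrow> (\<forall>m\<in>M. \<sigma> m))"

definition facts :: "'v set \<Rightarrow> 'v clause set" where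
  "facts A = (\<lambda>a. {Pos a}) ` A"

definition vars :: "'v clause set \<Rightarrow> 'v set" where
  "vars T = (\<Union>C\<in>T. lvar ` C)"

definition Pi3 :: "'v set \<Rightarrow> 'v clause set" where
  "Pi3 Y = {C. card C = 3 \<and> lvar ` C \<subseteq> Y}"

definition abduction_instance :: "'v set \<Rightarrow> 'v set \<Rightarrow> 'v clause set \<Rightarrow> bool" where
  "abduction_instance H M T \<longleftrightarrow> finite H \<and> finite M \<and> finite T \<and> T \<subseteq> Pi3 (vars T)"

definition SOL :: "'v set \<Rightarrow> 'v set \<Rightarrow> 'v clause set \<Rightarrow> 'v set set" where
  "SOL H M T = {H'. H' \<subseteq> H \<and> consistent (facts H' \<union> T) \<and> entails_vars (facts H' \<union> T) M}"

section \<open>The reduction f, with fresh variables c(gamma), d(gamma) indexed by gamma in Pi(H u X)\<close>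

definition red_H :: "('v clause \<Rightarrow> 'v) \<Rightarrow> ('v clause \<Rightarrow> 'v) \<Rightarrow> 'v set \<Rightarrow> 'v clause set \<Rightarrow> 'v set" where
  "red_H c d H T = H \<union> c ` Pi3 (H \<union> vars T) \<union> d ` Pi3 (H \<union> vars T)"

definition red_M :: "('v clause \<Rightarrow> 'v) \<Rightarrow> ('v clause \<Rightarrow> 'v) \<Rightarrow> 'v set \<Rightarrow> 'v set \<Rightarrow> 'v clause set \<Rightarrow> 'v set" where
  "red_M c d H M T = M \<union> c ` {g \<in> Pi3 (H \<union> vars T). g \<in> T} \<union> d ` {g \<in> Pi3 (H \<union> vars T). g \<notin> T}"

definition red_T :: "('v clause \<Rightarrow> 'v) \<Rightarrow> ('v clause \<Rightarrow> 'v) \<Rightarrow> 'v set \<Rightarrow> 'v clause set \<Rightarrow> 'v clause set" where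
  "red_T c d H T =
     {{Neg (c g), Neg (d g)} | g. g \<in> Pi3 (H \<union> vars T)}
   \<union> {insert (Neg (c g)) g | g. g \<in> Pi3 (H \<union> vars T)}"

end

theory Submission
  imports Defs
begin

text \<open>
  A solution of the reduced instance must contain every mark, i.e. each c \<gamma> with
  \<gamma> \<in> T and each d \<gamma> with \<gamma> \<notin> T: the fresh variables occur only negatively in T',
  so a model can always switch an unasserted one off.  Consistency with the clauses
  \<not> c \<gamma> \<or> \<not> d \<gamma> then excludes all other fresh variables, so a solution is S \<union> marks
  with S \<subseteq> H.  Finally, under the marks T' is a conservative extension of T: the
  clauses c \<gamma> \<longrightarrow> \<gamma> with c \<gamma> asserted restore T, and every model of T extends to a
  model of T' by setting c \<gamma> and d \<gamma> according to whether \<gamma> \<in> T.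
\<close>

lemma models_facts_Un: "models \<sigma> (facts A \<union> F) \<longleftrightarrow> (\<forall>a\<in>A. \<sigma> a) \<and> models \<sigma> F"
proof -
  have "models \<sigma> (facts A \<union> F) \<longleftrightarrow> (\<forall>a\<in>A. clause_sat \<sigma> {Pos a}) \<and> models \<sigma> F"
    unfolding models_def facts_def by blast
  then show ?thesis
    by (simp add: clause_sat_def)
qed

lemma entails_vars_Un: "entails_vars F (A \<union> B) \<longleftrightarrow> entails_vars F A \<and> entails_vars F B"
  by (auto simp: entails_vars_def)

lemma entails_vars_facts: "B \<subseteq> A \<Longrightarrow> entails_vars (facts A \<union> F) B"
  by (auto simp: entails_vars_def models_facts_Un)

lemma clause_sat_cong:
  assumes "\<And>l. l \<in> C \<Longrightarrow> \<sigma> (lvar l) = \<tau> (lvar l)"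
  shows "clause_sat \<sigma> C = clause_sat \<tau> C"
proof -
  have "lit_sat \<sigma> l = lit_sat \<tau> l" if "l \<in> C" for l
    using assms[OF that] by (cases l) auto
  then show ?thesis
    by (auto simp: clause_sat_def)
qed

lemma models_fun_upd_False:
  assumes "models \<sigma> F" and "Pos v \<notin> \<Union> F"
  shows "models (\<sigma>(v := False)) F"
  unfolding models_def clause_sat_def
proof
  fix C assume "C \<in> F"
  then obtain l where "l \<in> C" "lit_sat \<sigma> l"
    using assms(1) by (auto simp: models_def clause_sat_def)
  moreover have "l \<noteq> Pos v"
    using \<open>C \<in> F\<close> \<open>l \<in> C\<close> assms(2) by blast
  ultimately have "lit_sat (\<sigma>(v := False)) l"
    by (cases l) auto
  with \<open>l \<in> C\<close> show "\<exists>l\<in>C. lit_sat (\<sigma>(v := False)) l" ..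
qed

lemma entailed_negative_var_in_facts:
  assumes "consistent (facts A \<union> F)" and "entails_vars (facts A \<union> F) {v}"
    and "Pos v \<notin> \<Union> F"
  shows "v \<in> A"
proof (rule ccontr)
  assume "v \<notin> A"
  obtain \<sigma> where "models \<sigma> (facts A \<union> F)"
    using assms(1) by (auto simp: consistent_def)
  moreover have "Pos v \<notin> \<Union> (facts A \<union> F)"
    using \<open>v \<notin> A\<close> assms(3) by (auto simp: facts_def)
  ultimately have "models (\<sigma>(v := False)) (facts A \<union> F)"
    by (rule models_fun_upd_False)
  then show False
    using assms(2) by (auto simp: entails_vars_def)
qed

lemma conservative_extension_iff:
  assumes restrict: "\<And>\<tau>. models \<tau> F' \<Longrightarrow> models \<tau> F"
    and extend: "\<And>\<sigma>. models \<sigma> F \<Longrightarrow> \<exists>\<sigma>'. models \<sigma>' F' \<and> (\<forall>m\<in>M. \<sigma>' m = \<sigma> m)"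
  shows "consistent F' \<longleftrightarrow> consistent F" and "entails_vars F' M \<longleftrightarrow> entails_vars F M"
proof -
  show "consistent F' \<longleftrightarrow> consistent F"
    using restrict extend by (meson consistent_def)
  show "entails_vars F' M \<longleftrightarrow> entails_vars F M"
    unfolding entails_vars_def using restrict extend by metis
qed

locale abduction_reduction =
  fixes H M :: "'v set" and T :: "'v clause set" and c d :: "'v clause \<Rightarrow> 'v"
  assumes T_subset_Pi3: "T \<subseteq> Pi3 (H \<union> vars T)"
    and c_inj: "inj_on c (Pi3 (H \<union> vars T))"
    and d_inj: "inj_on d (Pi3 (H \<union> vars T))"
    and cd_disj: "c ` Pi3 (H \<union> vars T) \<inter> d ` Pi3 (H \<union> vars T) = {}"
    and fresh: "(c ` Pi3 (H \<union> vars T) \<union> d ` Pi3 (H \<union> vars T)) \<inter> (H \<union> vars T \<union> M) = {}"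
begin

abbreviation \<Gamma> :: "'v clause set" where
  "\<Gamma> \<equiv> Pi3 (H \<union> vars T)"

definition marks :: "'v set" where
  "marks = c ` {g \<in> \<Gamma>. g \<in> T} \<union> d ` {g \<in> \<Gamma>. g \<notin> T}"

definition extend :: "('v \<Rightarrow> bool) \<Rightarrow> 'v \<Rightarrow> bool" where
  "extend \<sigma> v =
     (if v \<in> c ` \<Gamma> then inv_into \<Gamma> c v \<in> T
      else if v \<in> d ` \<Gamma> then inv_into \<Gamma> d v \<notin> T
      else \<sigma> v)"

lemma extend_c: "g \<in> \<Gamma> \<Longrightarrow> extend \<sigma> (c g) \<longleftrightarrow> g \<in> T"
  using c_inj by (simp add: extend_def)

lemma extend_d: "g \<in> \<Gamma> \<Longrightarrow> extend \<sigma> (d g) \<longleftrightarrow> g \<notin> T"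
  using d_inj cd_disj by (auto simp: extend_def)

lemma extend_original_var: "v \<in> H \<union> vars T \<union> M \<Longrightarrow> extend \<sigma> v = \<sigma> v"
  using fresh by (auto simp: extend_def)

lemma lvar_mem_\<Gamma>: "g \<in> \<Gamma> \<Longrightarrow> l \<in> g \<Longrightarrow> lvar l \<in> H \<union> vars T"
  by (auto simp: Pi3_def)

lemma marks_subset_fresh: "marks \<subseteq> c ` \<Gamma> \<union> d ` \<Gamma>"
  by (auto simp: marks_def)

lemma models_red_T_iff:
  "models \<sigma> (red_T c d H T) \<longleftrightarrow>
     (\<forall>g\<in>\<Gamma>. \<not> \<sigma> (c g) \<or> \<not> \<sigma> (d g)) \<and> (\<forall>g\<in>\<Gamma>. \<sigma> (c g) \<longrightarrow> clause_sat \<sigma> g)"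
proof -
  have "models \<sigma> (red_T c d H T) \<longleftrightarrow>
      (\<forall>g\<in>\<Gamma>. clause_sat \<sigma> {Neg (c g), Neg (d g)}) \<and> (\<forall>g\<in>\<Gamma>. clause_sat \<sigma> (insert (Neg (c g)) g))"
    unfolding models_def red_T_def by blast
  then show ?thesis
    by (simp add: clause_sat_def)
qed

lemma Pos_fresh_notin_red_T:
  assumes "v \<in> c ` \<Gamma> \<union> d ` \<Gamma>"
  shows "Pos v \<notin> \<Union> (red_T c d H T)"
proof
  assume "Pos v \<in> \<Union> (red_T c d H T)"
  then obtain g where "g \<in> \<Gamma>" "Pos v \<in> g"
    by (auto simp: red_T_def)
  then have "v \<in> H \<union> vars T"
    using lvar_mem_\<Gamma> by fastforce
  with assms fresh show False
    by blast
qed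

lemma models_restrict:
  assumes "models \<tau> (facts (S \<union> marks) \<union> red_T c d H T)"
  shows "models \<tau> (facts S \<union> T)"
proof -
  have asserted: "\<forall>a\<in>S \<union> marks. \<tau> a" and red: "models \<tau> (red_T c d H T)"
    using assms by (auto simp: models_facts_Un)
  have "models \<tau> T"
    unfolding models_def
  proof
    fix g assume "g \<in> T"
    have "g \<in> \<Gamma>"
      using \<open>g \<in> T\<close> T_subset_Pi3 by blast
    moreover from this have "\<tau> (c g)"
      using asserted \<open>g \<in> T\<close> by (auto simp: marks_def)
    ultimately show "clause_sat \<tau> g"
      using red by (auto simp: models_red_T_iff)
  qed
  with asserted show ?thesis
    by (simp add: models_facts_Un)
qed

lemma models_extend:
  assumes "S \<subseteq> H" and "models \<sigma> (facts S \<union> T)"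
  shows "models (extend \<sigma>) (facts (S \<union> marks) \<union> red_T c d H T)"
proof -
  have "\<forall>a\<in>S. \<sigma> a" and T_sat: "models \<sigma> T"
    using assms(2) by (auto simp: models_facts_Un)
  then have "\<forall>a\<in>S \<union> marks. extend \<sigma> a"
    using assms(1) by (auto simp: marks_def extend_c extend_d extend_original_var)
  moreover have "clause_sat (extend \<sigma>) g" if "g \<in> \<Gamma>" "extend \<sigma> (c g)" for g
  proof -
    have "clause_sat \<sigma> g"
      using that T_sat by (auto simp: extend_c models_def)
    moreover have "extend \<sigma> (lvar l) = \<sigma> (lvar l)" if "l \<in> g" for l
      using lvar_mem_\<Gamma>[OF \<open>g \<in> \<Gamma>\<close> that] extend_original_var by blast
    ultimately show ?thesis
      using clause_sat_cong by metis
  qed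
  ultimately show ?thesis
    by (auto simp: models_facts_Un models_red_T_iff extend_c extend_d)
qed

lemma
  assumes "S \<subseteq> H"
  shows consistent_marked_iff:
      "consistent (facts (S \<union> marks) \<union> red_T c d H T) \<longleftrightarrow> consistent (facts S \<union> T)"
    and entails_vars_marked_iff:
      "entails_vars (facts (S \<union> marks) \<union> red_T c d H T) M \<longleftrightarrow> entails_vars (facts S \<union> T) M"
proof -
  have extensible: "\<exists>\<sigma>'. models \<sigma>' (facts (S \<union> marks) \<union> red_T c d H T) \<and> (\<forall>m\<in>M. \<sigma>' m = \<sigma> m)"
    if "models \<sigma> (facts S \<union> T)" for \<sigma>
    using models_extend[OF assms that] extend_original_var by blast
  show "consistent (facts (S \<union> marks) \<union> red_T c d H T) \<longleftrightarrow> consistent (facts S \<union> T)"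
    by (rule conservative_extension_iff(1)[OF models_restrict extensible])
  show "entails_vars (facts (S \<union> marks) \<union> red_T c d H T) M \<longleftrightarrow> entails_vars (facts S \<union> T) M"
    by (rule conservative_extension_iff(2)[OF models_restrict extensible])
qed

lemma marks_subset_solution:
  assumes "A \<in> SOL (red_H c d H T) (red_M c d H M T) (red_T c d H T)"
  shows "marks \<subseteq> A"
proof
  fix v assume "v \<in> marks"
  have "consistent (facts A \<union> red_T c d H T)"
    and "entails_vars (facts A \<union> red_T c d H T) {v}"
    using assms \<open>v \<in> marks\<close> by (auto simp: SOL_def red_M_def marks_def entails_vars_def)
  moreover have "Pos v \<notin> \<Union> (red_T c d H T)"
    using \<open>v \<in> marks\<close> marks_subset_fresh by (intro Pos_fresh_notin_red_T) blast
  ultimately show "v \<in> A"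
    by (rule entailed_negative_var_in_facts)
qed

lemma solution_eq_marked:
  assumes "A \<in> SOL (red_H c d H T) (red_M c d H M T) (red_T c d H T)"
  shows "A = (A \<inter> H) \<union> marks"
proof -
  have marks_A: "marks \<subseteq> A"
    using assms by (rule marks_subset_solution)
  obtain \<tau> where "models \<tau> (facts A \<union> red_T c d H T)"
    using assms by (auto simp: SOL_def consistent_def)
  then have asserted: "\<forall>a\<in>A. \<tau> a" and exclusive: "\<forall>g\<in>\<Gamma>. \<not> \<tau> (c g) \<or> \<not> \<tau> (d g)"
    by (auto simp: models_facts_Un models_red_T_iff)
  have "c g \<notin> A" if "g \<in> \<Gamma>" "g \<notin> T" for g
  proof -
    have "d g \<in> A"
      using that marks_A unfolding marks_def by blast
    then show ?thesis
      using that asserted exclusive by blast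
  qed
  moreover have "d g \<notin> A" if "g \<in> \<Gamma>" "g \<in> T" for g
  proof -
    have "c g \<in> A"
      using that marks_A unfolding marks_def by blast
    then show ?thesis
      using that asserted exclusive by blast
  qed
  moreover have "A \<subseteq> H \<union> c ` \<Gamma> \<union> d ` \<Gamma>"
    using assms by (simp add: SOL_def red_H_def)
  ultimately have "A \<subseteq> (A \<inter> H) \<union> marks"
    unfolding marks_def by blast
  with marks_A show ?thesis
    by blast
qed

theorem SOL_red_eq:
  "SOL (red_H c d H T) (red_M c d H M T) (red_T c d H T) = (\<lambda>S. S \<union> marks) ` SOL H M T"
proof
  show "SOL (red_H c d H T) (red_M c d H M T) (red_T c d H T) \<subseteq> (\<lambda>S. S \<union> marks) ` SOL H M T"
  proof
    fix A assume A: "A \<in> SOL (red_H c d H T) (red_M c d H M T) (red_T c d H T)"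
    then have A_eq: "A = (A \<inter> H) \<union> marks"
      by (rule solution_eq_marked)
    have "consistent (facts (A \<inter> H \<union> marks) \<union> red_T c d H T)"
      and "entails_vars (facts (A \<inter> H \<union> marks) \<union> red_T c d H T) M"
      using A unfolding A_eq[symmetric] by (simp_all add: SOL_def red_M_def entails_vars_Un)
    then have "A \<inter> H \<in> SOL H M T"
      by (simp add: SOL_def consistent_marked_iff entails_vars_marked_iff)
    with A_eq show "A \<in> (\<lambda>S. S \<union> marks) ` SOL H M T"
      by blast
  qed
  show "(\<lambda>S. S \<union> marks) ` SOL H M T \<subseteq> SOL (red_H c d H T) (red_M c d H M T) (red_T c d H T)"
  proof
    fix A assume "A \<in> (\<lambda>S. S \<union> marks) ` SOL H M T"
    then obtain S where S: "S \<in> SOL H M T" and A: "A = S \<union> marks"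
      by blast
    then have "S \<subseteq> H"
      by (simp add: SOL_def)
    moreover have "entails_vars (facts A \<union> red_T c d H T) marks"
      using A by (simp add: entails_vars_facts)
    ultimately show "A \<in> SOL (red_H c d H T) (red_M c d H M T) (red_T c d H T)"
      using S A marks_subset_fresh consistent_marked_iff entails_vars_marked_iff
      by (auto simp: SOL_def red_H_def red_M_def marks_def entails_vars_Un)
  qed
qed

end

theorem lemma1:
  fixes H M :: "'v set" and T :: "'v clause set" and c d :: "'v clause \<Rightarrow> 'v"
  assumes inst: "abduction_instance H M T"
    and c_inj: "inj_on c (Pi3 (H \<union> vars T))"
    and d_inj: "inj_on d (Pi3 (H \<union> vars T))"
    and cd_disj: "c ` Pi3 (H \<union> vars T) \<inter> d ` Pi3 (H \<union> vars T) = {}"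
    and fresh: "(c ` Pi3 (H \<union> vars T) \<union> d ` Pi3 (H \<union> vars T)) \<inter> (H \<union> vars T \<union> M) = {}"
  shows "SOL (red_H c d H T) (red_M c d H M T) (red_T c d H T) =
         (\<lambda>S. S \<union> c ` {g \<in> Pi3 (H \<union> vars T). g \<in> T} \<union> d ` {g \<in> Pi3 (H \<union> vars T). g \<notin> T})
           ` SOL H M T"
proof -
  have "T \<subseteq> Pi3 (H \<union> vars T)"
    using inst by (auto simp: abduction_instance_def Pi3_def)
  then interpret abduction_reduction H M T c d
    using c_inj d_inj cd_disj fresh by unfold_locales
  show ?thesis
    using SOL_red_eq by (simp add: marks_def Un_assoc)
qed

end
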